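(* Let $\Gamma\subsetneqq\mathbb{R}^n$ be an open convex cone with vertex at the origin such that $\{\lambda:\lambda_i>0\ \forall i\}\subset\Gamma\subset\{\lambda:\sum_i\lambda_i>0\}$, and let $f$ be a smooth symmetric function on $\Gamma$ with $\frac{\partial f}{\partial\lambda_i}>0$ in $\Gamma$ for all $i$ and $\limsup_{\lambda\to\lambda_0}f(\lambda)<1$ for every $\lambda_0\in\partial\Gamma$. Let $A=\mathrm{diag}(a_1,\dots,a_n)\in\mathcal{A}$ with $0<a_1\leq\cdots\leq a_n$. Then there is a unique monotone decreasing smooth function $g$ defined on $[1,+\infty)$ such that, for all $w\in[1,+\infty)$, $(g(w),a_2w,\dots,a_nw)\in\Gamma$ and $$f(g(w),a_2w,\dots,a_nw)=1.$$
   Context: $S^+(n)$ is the set of real symmetric positive definite $n\times n$ matrices; for $A\in S^+(n)$, $a=\lambda(A)$ denotes its eigenvalues, $\hat a=\max_ia_i$, $\hat f_\lambda(a)=\max_i\frac{\partial f}{\partial\lambda_i}(a)$, and $\mathcal{A}:=\{A\in S^+(n): f(a)=1,\ \frac{\nabla f(a)\cdot a}{2\hat a\hat f_\lambda(a)}>1\}$. *)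

theory Defs
  imports "HOL-Analysis.Analysis"
begin

definition pd :: "'n::finite \<Rightarrow> (real^'n \<Rightarrow> real) \<Rightarrow> real^'n \<Rightarrow> real" where
  "pd i f x = deriv (\<lambda>t. f (x + t *\<^sub>R axis i 1)) 0"

fun iter_pd :: "'n::finite list \<Rightarrow> (real^'n \<Rightarrow> real) \<Rightarrow> real^'n \<Rightarrow> real" where
  "iter_pd [] f = f"
| "iter_pd (i # is) f = pd i (iter_pd is f)"

definition smooth_on_vec :: "(real^'n::finite) set \<Rightarrow> (real^'n \<Rightarrow> real) \<Rightarrow> bool" where
  "smooth_on_vec S f \<longleftrightarrow>
     (\<forall>is. continuous_on S (iter_pd is f) \<and>
        (\<forall>i. \<forall>x\<in>S. (\<lambda>t. iter_pd is f (x + t *\<^sub>R axis i 1)) differentiable (at 0)))"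

text \<open>g is smooth on the (possibly closed) set T of reals: it has derivatives of all orders
  on T (one-sided at boundary points, via derivatives within T).\<close>
definition smooth_on_real :: "real set \<Rightarrow> (real \<Rightarrow> real) \<Rightarrow> bool" where
  "smooth_on_real T g \<longleftrightarrow>
     (\<exists>D. D 0 = g \<and> (\<forall>k. \<forall>x\<in>T. (D k has_real_derivative D (Suc k) x) (at x within T)))"

text \<open>The first index lambda_1 (index type carries the order 1 < 2 < ... < n).\<close>
definition first_idx :: "'n::{finite,wellorder}" where
  "first_idx = (LEAST i. True)"

definition curve_pt :: "(real \<Rightarrow> real) \<Rightarrow> (real,'n::{finite,wellorder}) vec \<Rightarrow> real \<Rightarrow> (real,'n) vec" where
  "curve_pt g a w = (\<chi> i. if i = first_idx then g w else a $ i * w)"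

text \<open>Membership of diag(a) in the class \<A> (in terms of its eigenvalue vector a).\<close>
definition in_class_A :: "(real^'n::finite \<Rightarrow> real) \<Rightarrow> real^'n \<Rightarrow> bool" where
  "in_class_A f a \<longleftrightarrow> (\<forall>i. 0 < a $ i) \<and> f a = 1 \<and>
     (\<Sum>i\<in>UNIV. pd i f a * a $ i) /
       (2 * Max (range (\<lambda>i. a $ i)) * Max (range (\<lambda>i. pd i f a))) > 1"

end

theory Submission
  imports Defs
begin

(* Along each line {s e_1 + w (0, a_2, ..., a_n)} the function f is strictly increasing in s,
   is at least f a = 1 at s = a_1, and drops below 1 near the frontier of the cone, which the
   line meets because the cone lies in the half-space {sum x > 0}. This gives a unique level
   point g(w); monotonicity of f in all variables makes g decreasing. By the mean value theorem
   the difference quotients of g are values of the smooth function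
   -(sum_{i>=2} a_i d_i f) / d_1 f at points tending to the curve, so the curve w -> (g w, a_2 w, ...)
   is an integral curve of a smooth vector field; composing with such a curve preserves smoothness. *)

definition restrict_coords :: "'n set \<Rightarrow> real^'n::finite \<Rightarrow> real^'n" where
  "restrict_coords I h = (\<chi> i. if i \<in> I then h $ i else 0)"

\<comment> \<open>Move from x to x + h one coordinate at a time, applying the mean value bound on each edge.\<close>
lemma coordinatewise_increment_bound:
  fixes \<phi> :: "real^'n::finite \<Rightarrow> real" and D :: "'n \<Rightarrow> real^'n \<Rightarrow> real"
  assumes partial: "\<And>i y. dist y x < d \<Longrightarrow> ((\<lambda>t. \<phi> (y + t *\<^sub>R axis i 1)) has_real_derivative D i y) (at 0)"
    and close: "\<And>i y. dist y x < d \<Longrightarrow> \<bar>D i y - D i x\<bar> \<le> e"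
    and "norm h < d"
  shows "\<bar>\<phi> (x + restrict_coords I h) - \<phi> x - (\<Sum>i\<in>I. D i x * h $ i)\<bar> \<le> e * (\<Sum>i\<in>I. \<bar>h $ i\<bar>)"
proof (induction I rule: finite_induct[OF finite, case_names empty insert])
  case empty
  have "restrict_coords {} h = 0" by (simp add: restrict_coords_def vec_eq_iff)
  then show ?case by simp
next
  case (insert j I)
  define y where "y = x + restrict_coords I h"
  have y_j: "x + restrict_coords (insert j I) h = y + h $ j *\<^sub>R axis j 1"
    using insert by (auto simp: y_def restrict_coords_def vec_eq_iff axis_def)
  have near: "dist (y + s *\<^sub>R axis j 1) x < d" if "s \<in> {-\<bar>h $ j\<bar>..\<bar>h $ j\<bar>}" for s
  proof -
    have "norm (y + s *\<^sub>R axis j 1 - x) \<le> norm h"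
      by (rule norm_le_componentwise_cart)
        (use that insert in \<open>auto simp: y_def restrict_coords_def axis_def\<close>)
    then show ?thesis using \<open>norm h < d\<close> by (simp add: dist_norm)
  qed
  define \<psi> where "\<psi> t = \<phi> (y + t *\<^sub>R axis j 1) - t * D j x" for t
  have \<psi>_deriv: "(\<psi> has_real_derivative D j (y + s *\<^sub>R axis j 1) - D j x) (at s)"
    if "s \<in> {-\<bar>h $ j\<bar>..\<bar>h $ j\<bar>}" for s
  proof -
    have "((\<lambda>t. \<phi> (y + s *\<^sub>R axis j 1 + t *\<^sub>R axis j 1)) has_real_derivative
           D j (y + s *\<^sub>R axis j 1)) (at 0)"
      using partial near[OF that] by blast
    then have "((\<lambda>t. \<phi> (y + t *\<^sub>R axis j 1)) has_real_derivative D j (y + s *\<^sub>R axis j 1)) (at (0 + s))"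
      by (subst DERIV_shift) (simp add: scaleR_add_left algebra_simps)
    then show ?thesis unfolding \<psi>_def by (auto intro!: derivative_eq_intros)
  qed
  have "norm (\<psi> (h $ j) - \<psi> 0) \<le> e * norm (h $ j - 0)"
  proof (rule field_differentiable_bound[where S="{-\<bar>h $ j\<bar>..\<bar>h $ j\<bar>}"
        and f'="\<lambda>s. D j (y + s *\<^sub>R axis j 1) - D j x"])
    fix s assume "s \<in> {-\<bar>h $ j\<bar>..\<bar>h $ j\<bar>}"
    then show "norm (D j (y + s *\<^sub>R axis j 1) - D j x) \<le> e"
      using close near by auto
  qed (auto intro!: has_field_derivative_at_within \<psi>_deriv)
  then show ?case
    using insert unfolding y_j \<psi>_def y_def by (simp add: algebra_simps)
qed

lemma has_derivative_of_continuous_partials: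
  fixes \<phi> :: "real^'n::finite \<Rightarrow> real" and D :: "'n \<Rightarrow> real^'n \<Rightarrow> real"
  assumes S: "open S" "x \<in> S"
    and partial: "\<And>i y. y \<in> S \<Longrightarrow> ((\<lambda>t. \<phi> (y + t *\<^sub>R axis i 1)) has_real_derivative D i y) (at 0)"
    and cont: "\<And>i. continuous_on S (D i)"
  shows "(\<phi> has_derivative (\<lambda>h. \<Sum>i\<in>UNIV. D i x * h $ i)) (at x)"
  unfolding has_derivative_at_alt
proof (intro conjI allI impI)
  show "bounded_linear (\<lambda>h. \<Sum>i\<in>UNIV. D i x * h $ i)"
    by (intro bounded_linear_sum bounded_linear_compose[OF bounded_linear_mult_right bounded_linear_vec_nth])
next
  fix e :: real assume "0 < e"
  define e' where "e' = e / real CARD('n)"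
  have "0 < e'" using \<open>0 < e\<close> by (simp add: e'_def)
  have "\<forall>\<^sub>F y in nhds x. y \<in> S \<and> (\<forall>i. \<bar>D i y - D i x\<bar> < e')"
  proof (intro eventually_conj eventually_all_finite)
    show "\<forall>\<^sub>F y in nhds x. y \<in> S" using S eventually_nhds_in_open by blast
    fix i
    have "(D i \<longlongrightarrow> D i x) (nhds x)"
      using cont S continuous_on_eq_continuous_at isCont_def tendsto_at_iff_tendsto_nhds by blast
    then show "\<forall>\<^sub>F y in nhds x. \<bar>D i y - D i x\<bar> < e'"
      using \<open>0 < e'\<close> by (auto simp: tendsto_iff dist_real_def)
  qed
  then obtain d where "d > 0" and d: "\<And>y. dist y x < d \<Longrightarrow> y \<in> S \<and> (\<forall>i. \<bar>D i y - D i x\<bar> < e')"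
    unfolding eventually_nhds_metric by blast
  show "\<exists>d>0. \<forall>y. norm (y - x) < d \<longrightarrow>
      norm (\<phi> y - \<phi> x - (\<Sum>i\<in>UNIV. D i x * (y - x) $ i)) \<le> e * norm (y - x)"
  proof (intro exI[of _ d] conjI allI impI)
    fix y assume y: "norm (y - x) < d"
    have "x + restrict_coords UNIV (y - x) = y" by (simp add: restrict_coords_def vec_eq_iff)
    then have "norm (\<phi> y - \<phi> x - (\<Sum>i\<in>UNIV. D i x * (y - x) $ i))
        \<le> e' * (\<Sum>i\<in>UNIV. \<bar>(y - x) $ i\<bar>)"
      using coordinatewise_increment_bound[of x d \<phi> D e' "y - x" UNIV] partial d y
      by (simp add: less_imp_le)
    also have "\<dots> \<le> e' * (\<Sum>i::'n\<in>UNIV. norm (y - x))"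
      using \<open>0 < e'\<close> by (intro mult_left_mono sum_mono component_le_norm_cart) auto
    also have "\<dots> = e * norm (y - x)" by (simp add: e'_def)
    finally show "norm (\<phi> y - \<phi> x - (\<Sum>i\<in>UNIV. D i x * (y - x) $ i)) \<le> e * norm (y - x)" .
  qed (use \<open>d > 0\<close> in auto)
qed

lemma iter_pd_append: "iter_pd (is @ js) \<phi> = iter_pd is (iter_pd js \<phi>)"
  by (induction "is") auto

lemma smooth_on_vec_iter_pd: "smooth_on_vec S \<phi> \<Longrightarrow> smooth_on_vec S (iter_pd js \<phi>)"
  unfolding smooth_on_vec_def by (metis iter_pd_append)

lemma smooth_on_vec_pd: "smooth_on_vec S \<phi> \<Longrightarrow> smooth_on_vec S (pd i \<phi>)"
  using smooth_on_vec_iter_pd[of S \<phi> "[i]"] by simp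

lemma smooth_on_vec_has_derivative:
  assumes "open S" "smooth_on_vec S \<phi>" "x \<in> S"
  shows "(\<phi> has_derivative (\<lambda>h. \<Sum>i\<in>UNIV. pd i \<phi> x * h $ i)) (at x)"
proof (rule has_derivative_of_continuous_partials[OF assms(1,3)])
  fix i y assume "y \<in> S"
  then have "(\<lambda>t. \<phi> (y + t *\<^sub>R axis i 1)) differentiable (at 0)"
    using assms(2) iter_pd.simps(1) unfolding smooth_on_vec_def by metis
  then show "((\<lambda>t. \<phi> (y + t *\<^sub>R axis i 1)) has_real_derivative pd i \<phi> y) (at 0)"
    unfolding pd_def by (simp add: DERIV_deriv_iff_real_differentiable)
next
  show "continuous_on S (pd i \<phi>)" for i
    using smooth_on_vec_pd[OF assms(2)] iter_pd.simps(1) unfolding smooth_on_vec_def by metis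
qed

text \<open>Smoothness in coinductive form: closure under the field operations and under composition
  with integral curves is then proved by coinduction up to rational expressions.\<close>

coinductive infinitely_differentiable_on :: "(real^'n::finite) set \<Rightarrow> (real^'n \<Rightarrow> real) \<Rightarrow> bool"
  for S where
  "(\<forall>x\<in>S. (\<phi> has_derivative (\<lambda>h. \<Sum>i\<in>UNIV. D i x * h $ i)) (at x)) \<Longrightarrow>
   (\<forall>i. infinitely_differentiable_on S (D i)) \<Longrightarrow> infinitely_differentiable_on S \<phi>"

lemma smooth_on_vec_imp_infinitely_differentiable_on:
  assumes "open S" "smooth_on_vec S \<phi>"
  shows "infinitely_differentiable_on S \<phi>"
  using assms(2)
proof (coinduction arbitrary: \<phi>)
  case (infinitely_differentiable_on \<phi>)
  then show ?case
    using smooth_on_vec_has_derivative[OF assms(1)] smooth_on_vec_pd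
    by (intro exI[of _ \<phi>] exI[of _ "\<lambda>i. pd i \<phi>"]) auto
qed

lemma infinitely_differentiable_onE:
  assumes "infinitely_differentiable_on S \<phi>"
  obtains D where "\<forall>i. infinitely_differentiable_on S (D i)"
    "\<forall>x\<in>S. (\<phi> has_derivative (\<lambda>h. \<Sum>i\<in>UNIV. D i x * h $ i)) (at x)"
  using assms by (auto elim: infinitely_differentiable_on.cases)

lemma infinitely_differentiable_on_imp_isCont:
  "infinitely_differentiable_on S \<phi> \<Longrightarrow> x \<in> S \<Longrightarrow> isCont \<phi> x"
  by (erule infinitely_differentiable_onE) (auto dest: has_derivative_continuous)

inductive rational_expr :: "(real^'n::finite) set \<Rightarrow> (real^'n \<Rightarrow> real) set \<Rightarrow> (real^'n \<Rightarrow> real) \<Rightarrow> bool"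
  for S B where
  base: "\<phi> \<in> B \<Longrightarrow> rational_expr S B \<phi>"
| const: "rational_expr S B (\<lambda>x. c)"
| add: "rational_expr S B \<phi> \<Longrightarrow> rational_expr S B \<psi> \<Longrightarrow> rational_expr S B (\<lambda>x. \<phi> x + \<psi> x)"
| mult: "rational_expr S B \<phi> \<Longrightarrow> rational_expr S B \<psi> \<Longrightarrow> rational_expr S B (\<lambda>x. \<phi> x * \<psi> x)"
| inverse: "rational_expr S B \<phi> \<Longrightarrow> (\<forall>x\<in>S. \<phi> x \<noteq> 0) \<Longrightarrow> rational_expr S B (\<lambda>x. inverse (\<phi> x))"

lemma rational_expr_sum:
  "(\<And>i. i \<in> I \<Longrightarrow> rational_expr S B (\<phi> i)) \<Longrightarrow> rational_expr S B (\<lambda>x. \<Sum>i\<in>I. \<phi> i x)"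
proof (induction I rule: infinite_finite_induct)
  case (infinite I)
  then show ?case using rational_expr.const[of S B 0] by simp
next
  case empty
  then show ?case using rational_expr.const[of S B 0] by simp
next
  case (insert i I)
  then show ?case by (simp add: rational_expr.add)
qed

definition has_partials_in :: "(real^'n::finite) set \<Rightarrow> ((real^'n \<Rightarrow> real) \<Rightarrow> bool) \<Rightarrow> (real^'n \<Rightarrow> real) \<Rightarrow> bool"
  where "has_partials_in S P \<phi> \<longleftrightarrow>
    (\<exists>D. (\<forall>i. P (D i)) \<and> (\<forall>x\<in>S. (\<phi> has_derivative (\<lambda>h. \<Sum>i\<in>UNIV. D i x * h $ i)) (at x)))"

lemma has_derivative_partials_add:
  fixes \<phi> \<psi> :: "real^'n::finite \<Rightarrow> real"
  assumes "(\<phi> has_derivative (\<lambda>h. \<Sum>i\<in>UNIV. D i x * h $ i)) (at x)"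
    and "(\<psi> has_derivative (\<lambda>h. \<Sum>i\<in>UNIV. E i x * h $ i)) (at x)"
  shows "((\<lambda>x. \<phi> x + \<psi> x) has_derivative (\<lambda>h. \<Sum>i\<in>UNIV. (D i x + E i x) * h $ i)) (at x)"
  by (rule has_derivative_eq_rhs[OF has_derivative_add[OF assms]])
    (simp add: fun_eq_iff distrib_right sum.distrib)

lemma has_derivative_partials_mult:
  fixes \<phi> \<psi> :: "real^'n::finite \<Rightarrow> real"
  assumes "(\<phi> has_derivative (\<lambda>h. \<Sum>i\<in>UNIV. D i x * h $ i)) (at x)"
    and "(\<psi> has_derivative (\<lambda>h. \<Sum>i\<in>UNIV. E i x * h $ i)) (at x)"
  shows "((\<lambda>x. \<phi> x * \<psi> x) has_derivative
      (\<lambda>h. \<Sum>i\<in>UNIV. (\<phi> x * E i x + D i x * \<psi> x) * h $ i)) (at x)"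
  by (rule has_derivative_eq_rhs[OF has_derivative_mult[OF assms]])
    (simp add: fun_eq_iff distrib_left distrib_right sum.distrib sum_distrib_left mult_ac)

lemma has_derivative_partials_inverse:
  fixes \<phi> :: "real^'n::finite \<Rightarrow> real"
  assumes "(\<phi> has_derivative (\<lambda>h. \<Sum>i\<in>UNIV. D i x * h $ i)) (at x)" and "\<phi> x \<noteq> 0"
  shows "((\<lambda>x. inverse (\<phi> x)) has_derivative
      (\<lambda>h. \<Sum>i\<in>UNIV. - 1 * (inverse (\<phi> x) * (D i x * inverse (\<phi> x))) * h $ i)) (at x)"
  by (rule has_derivative_eq_rhs[OF Deriv.has_derivative_inverse[OF assms(2) assms(1)]])
    (simp add: fun_eq_iff sum_distrib_left sum_negf mult_ac)

lemma has_partials_in_rational_expr: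
  assumes B: "\<And>\<phi>. \<phi> \<in> B \<Longrightarrow> has_partials_in S (rational_expr S B) \<phi>"
  shows "rational_expr S B \<phi> \<Longrightarrow> has_partials_in S (rational_expr S B) \<phi>"
proof (induction rule: rational_expr.induct)
  case (base \<phi>)
  then show ?case by (rule B)
next
  case (const c)
  have "((\<lambda>x. c) has_derivative (\<lambda>h. \<Sum>i\<in>UNIV. 0 * h $ i)) (at x)" for x :: "real^'n"
    by (simp add: has_derivative_const)
  then show ?case
    unfolding has_partials_in_def by (intro exI[of _ "\<lambda>i x. 0"]) (simp add: rational_expr.const)
next
  case (add \<phi> \<psi>)
  then obtain D E where "\<forall>i. rational_expr S B (D i)" "\<forall>i. rational_expr S B (E i)"
    "\<forall>x\<in>S. (\<phi> has_derivative (\<lambda>h. \<Sum>i\<in>UNIV. D i x * h $ i)) (at x)"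
    "\<forall>x\<in>S. (\<psi> has_derivative (\<lambda>h. \<Sum>i\<in>UNIV. E i x * h $ i)) (at x)"
    unfolding has_partials_in_def by blast
  then show ?case
    unfolding has_partials_in_def
    by (intro exI[of _ "\<lambda>i x. D i x + E i x"]) (simp add: rational_expr.add has_derivative_partials_add)
next
  case (mult \<phi> \<psi>)
  then obtain D E where "\<forall>i. rational_expr S B (D i)" "\<forall>i. rational_expr S B (E i)"
    "\<forall>x\<in>S. (\<phi> has_derivative (\<lambda>h. \<Sum>i\<in>UNIV. D i x * h $ i)) (at x)"
    "\<forall>x\<in>S. (\<psi> has_derivative (\<lambda>h. \<Sum>i\<in>UNIV. E i x * h $ i)) (at x)"
    unfolding has_partials_in_def by blast
  then show ?case
    unfolding has_partials_in_def using mult.hyps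
    by (intro exI[of _ "\<lambda>i x. \<phi> x * E i x + D i x * \<psi> x"])
      (simp add: rational_expr.add rational_expr.mult has_derivative_partials_mult)
next
  case (inverse \<phi>)
  then obtain D where D: "\<And>i. rational_expr S B (D i)"
    "\<And>x. x \<in> S \<Longrightarrow> (\<phi> has_derivative (\<lambda>h. \<Sum>i\<in>UNIV. D i x * h $ i)) (at x)"
    unfolding has_partials_in_def by blast
  have inv: "rational_expr S B (\<lambda>x. inverse (\<phi> x))"
    using inverse.hyps by (rule rational_expr.inverse)
  show ?case
    unfolding has_partials_in_def
  proof (intro exI[of _ "\<lambda>i x. - 1 * (inverse (\<phi> x) * (D i x * inverse (\<phi> x)))"] conjI allI ballI)
    show "rational_expr S B (\<lambda>x. - 1 * (inverse (\<phi> x) * (D i x * inverse (\<phi> x))))" for i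
      by (intro rational_expr.mult rational_expr.const inv D(1))
    show "((\<lambda>x. inverse (\<phi> x)) has_derivative
        (\<lambda>h. \<Sum>i\<in>UNIV. - 1 * (inverse (\<phi> x) * (D i x * inverse (\<phi> x))) * h $ i)) (at x)"
      if "x \<in> S" for x
      by (rule has_derivative_partials_inverse[where D=D, OF D(2)[OF that]]) (use inverse.hyps that in auto)
  qed
qed

lemma infinitely_differentiable_on_if_rational_expr:
  assumes B: "\<And>\<phi>. \<phi> \<in> B \<Longrightarrow> has_partials_in S (rational_expr S B) \<phi>"
    and \<phi>: "rational_expr S B \<phi>"
  shows "infinitely_differentiable_on S \<phi>"
  using \<phi>
proof (coinduction arbitrary: \<phi>)
  case (infinitely_differentiable_on \<phi>)
  then obtain D where "\<forall>i. rational_expr S B (D i)"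
    "\<forall>x\<in>S. (\<phi> has_derivative (\<lambda>h. \<Sum>i\<in>UNIV. D i x * h $ i)) (at x)"
    using has_partials_in_rational_expr[OF B] unfolding has_partials_in_def by blast
  then show ?case by (intro exI[of _ \<phi>] exI[of _ D]) auto
qed

lemma infinitely_differentiable_on_rational_expr:
  assumes "rational_expr S (Collect (infinitely_differentiable_on S)) \<phi>"
  shows "infinitely_differentiable_on S \<phi>"
proof (rule infinitely_differentiable_on_if_rational_expr[OF _ assms])
  fix \<psi> assume "\<psi> \<in> Collect (infinitely_differentiable_on S)"
  then obtain D where "\<forall>i. infinitely_differentiable_on S (D i)"
    "\<forall>x\<in>S. (\<psi> has_derivative (\<lambda>h. \<Sum>i\<in>UNIV. D i x * h $ i)) (at x)"
    by (auto elim: infinitely_differentiable_onE)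
  then show "has_partials_in S (rational_expr S (Collect (infinitely_differentiable_on S))) \<psi>"
    unfolding has_partials_in_def by (auto intro: rational_expr.base)
qed

lemma infinitely_differentiable_on_nth: "infinitely_differentiable_on S (\<lambda>x. x $ j)"
proof (rule infinitely_differentiable_on.intros[where D="\<lambda>i x. if i = j then 1 else 0"])
  have "(\<Sum>i\<in>UNIV. (if i = j then 1 else 0) * h $ i) = h $ j" for h :: "real^'a"
    by (simp add: if_distrib[of "\<lambda>c. c * _"] cong: if_cong)
  then show "\<forall>x\<in>S. ((\<lambda>x. x $ j) has_derivative (\<lambda>h. \<Sum>i\<in>UNIV. (if i = j then 1 else 0) * h $ i)) (at x)"
    by (simp add: bounded_linear_imp_has_derivative bounded_linear_vec_nth)
  show "\<forall>i. infinitely_differentiable_on S (\<lambda>x. if i = j then 1 else 0)"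
    by (auto intro: infinitely_differentiable_on_rational_expr rational_expr.const)
qed

lemma mean_value_partials:
  fixes \<phi> :: "real^'n::finite \<Rightarrow> real"
  assumes deriv: "\<And>z. z \<in> closed_segment x y \<Longrightarrow>
      (\<phi> has_derivative (\<lambda>h. \<Sum>i\<in>UNIV. D i z * h $ i)) (at z)"
  shows "\<exists>z\<in>closed_segment x y. \<phi> y - \<phi> x = (\<Sum>i\<in>UNIV. D i z * (y - x) $ i)"
proof -
  define z where "z t = x + t *\<^sub>R (y - x)" for t
  have z_segment: "z t \<in> closed_segment x y" if "t \<in> {0..1}" for t
  proof -
    have "z t = (1 - t) *\<^sub>R x + t *\<^sub>R y" by (simp add: z_def algebra_simps)
    then show ?thesis using that by (auto simp: in_segment)
  qed
  have "((\<lambda>t. \<phi> (z t)) has_derivative (\<lambda>h. \<Sum>i\<in>UNIV. D i (z t) * (h *\<^sub>R (y - x)) $ i))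
      (at t within {0..1})" if "0 \<le> t" "t \<le> 1" for t
  proof (rule has_derivative_compose[where f=z, OF _ deriv[OF z_segment]])
    show "(z has_derivative (\<lambda>h. h *\<^sub>R (y - x))) (at t within {0..1})"
      unfolding z_def by (auto intro!: derivative_eq_intros)
  qed (use that in auto)
  from mvt_very_simple[OF zero_le_one this] obtain t where "t \<in> {0..1}"
    "\<phi> (z 1) - \<phi> (z 0) = (\<Sum>i\<in>UNIV. D i (z t) * ((1 - 0) *\<^sub>R (y - x)) $ i)"
    by blast
  then show ?thesis
    using z_segment by (auto simp: z_def)
qed

lemma less_if_positive_partials:
  fixes \<phi> :: "real^'n::finite \<Rightarrow> real"
  assumes "convex S" "x \<in> S" "y \<in> S" "x \<le> y" "x \<noteq> y"
    and deriv: "\<And>z. z \<in> S \<Longrightarrow> (\<phi> has_derivative (\<lambda>h. \<Sum>i\<in>UNIV. D i z * h $ i)) (at z)"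
    and pos: "\<And>i z. z \<in> S \<Longrightarrow> 0 < D i z"
  shows "\<phi> x < \<phi> y"
proof -
  have "closed_segment x y \<subseteq> S"
    using assms(1-3) by (simp add: closed_segment_subset)
  then obtain z where "z \<in> S" and z: "\<phi> y - \<phi> x = (\<Sum>i\<in>UNIV. D i z * (y - x) $ i)"
    using mean_value_partials[of x y \<phi> D] deriv by blast
  obtain j where "x $ j \<noteq> y $ j"
    using \<open>x \<noteq> y\<close> by (auto simp: vec_eq_iff)
  then have "0 < D j z * (y - x) $ j"
    using \<open>x \<le> y\<close> pos[OF \<open>z \<in> S\<close>] by (simp add: less_eq_vec_def order_less_le)
  moreover have "0 \<le> D i z * (y - x) $ i" for i
    using \<open>x \<le> y\<close> pos[OF \<open>z \<in> S\<close>, of i] by (simp add: less_eq_vec_def)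
  ultimately have "0 < (\<Sum>i\<in>UNIV. D i z * (y - x) $ i)"
    by (intro sum_pos2[of UNIV j]) auto
  then show ?thesis using z by simp
qed

lemma exists_less_on_line_if_Limsup_frontier_less:
  fixes \<Gamma> :: "'a::real_normed_vector set" and f :: "'a \<Rightarrow> real"
  assumes "open \<Gamma>" "x \<in> \<Gamma>" and bdd: "bdd_below {t. x + t *\<^sub>R v \<in> \<Gamma>}"
    and frontier: "\<And>l. l \<in> frontier \<Gamma> \<Longrightarrow> Limsup (at l within \<Gamma>) (\<lambda>x. ereal (f x)) < c"
  shows "\<exists>t. x + t *\<^sub>R v \<in> \<Gamma> \<and> f (x + t *\<^sub>R v) < c"
proof -
  define L where "L = {t. x + t *\<^sub>R v \<in> \<Gamma>}"
  define t0 where "t0 = Inf L"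
  define l where "l = x + t0 *\<^sub>R v"
  have "0 \<in> L" using \<open>x \<in> \<Gamma>\<close> by (simp add: L_def)
  have "open L"
    unfolding L_def using open_vimage[OF \<open>open \<Gamma>\<close>, of "\<lambda>t. x + t *\<^sub>R v"]
    by (simp add: vimage_def continuous_intros)
  have "v \<noteq> 0"
  proof
    assume "v = 0"
    then obtain m :: real where "\<forall>t. m \<le> t"
      using bdd \<open>x \<in> \<Gamma>\<close> by (auto simp: bdd_below_def)
    then have "m \<le> m - 1" by blast
    then show False by simp
  qed
  have "t0 \<notin> L"
  proof
    assume "t0 \<in> L"
    then obtain r where "r > 0" "ball t0 r \<subseteq> L"
      using \<open>open L\<close> open_contains_ball by blast
    then have "t0 - r / 2 \<in> L" by (auto simp: dist_real_def)
    then show False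
      using cInf_lower[of "t0 - r / 2" L] bdd \<open>r > 0\<close> by (simp add: L_def t0_def)
  qed
  moreover have "t0 \<in> closure L"
    unfolding t0_def by (rule closure_contains_Inf) (use \<open>0 \<in> L\<close> bdd[folded L_def] in auto)
  ultimately have "at t0 within L \<noteq> bot"
    by (simp add: trivial_limit_within islimpt_in_closure)
  have on_line: "\<forall>\<^sub>F t in at t0 within L. x + t *\<^sub>R v \<in> \<Gamma> \<and> x + t *\<^sub>R v \<noteq> l"
    using \<open>v \<noteq> 0\<close> by (simp add: eventually_at_filter L_def l_def)
  have "((\<lambda>t. x + t *\<^sub>R v) \<longlongrightarrow> l) (at t0 within L)"
    unfolding l_def by (intro tendsto_intros)
  then have line: "filterlim (\<lambda>t. x + t *\<^sub>R v) (at l within \<Gamma>) (at t0 within L)"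
    using on_line by (simp add: filterlim_at)
  have "l \<in> closure \<Gamma>"
    by (rule Lim_in_closed_set[OF closed_closure _ \<open>at t0 within L \<noteq> bot\<close>
          \<open>((\<lambda>t. x + t *\<^sub>R v) \<longlongrightarrow> l) (at t0 within L)\<close>])
      (rule eventually_mono[OF on_line], use closure_subset in auto)
  moreover have "l \<notin> interior \<Gamma>"
    using \<open>t0 \<notin> L\<close> \<open>open \<Gamma>\<close> by (simp add: interior_open L_def l_def)
  ultimately have "\<forall>\<^sub>F y in at l within \<Gamma>. ereal (f y) < c"
    by (intro Limsup_lessD frontier) (simp add: frontier_def)
  then have "\<forall>\<^sub>F t in at t0 within L. ereal (f (x + t *\<^sub>R v)) < c"
    using line by (rule eventually_compose_filterlim)
  then obtain t where "ereal (f (x + t *\<^sub>R v)) < c" "x + t *\<^sub>R v \<in> \<Gamma>"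
    using eventually_happens'[OF \<open>at t0 within L \<noteq> bot\<close>] eventually_conj[OF _ on_line] by blast
  then show ?thesis by auto
qed

lemma smooth_on_real_comp_integral_curve:
  fixes \<gamma> :: "real \<Rightarrow> real^'n::finite" and V :: "real^'n \<Rightarrow> real^'n"
  assumes \<gamma>: "\<And>t. t \<in> T \<Longrightarrow> \<gamma> t \<in> S"
    and \<gamma>': "\<And>t. t \<in> T \<Longrightarrow> (\<gamma> has_vector_derivative V (\<gamma> t)) (at t within T)"
    and V: "\<And>i. infinitely_differentiable_on S (\<lambda>x. V x $ i)"
    and \<phi>: "infinitely_differentiable_on S \<phi>"
  shows "smooth_on_real T (\<phi> \<circ> \<gamma>)"
proof -
  have "\<exists>\<psi>'. infinitely_differentiable_on S \<psi>' \<and>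
      (\<forall>t\<in>T. ((\<psi> \<circ> \<gamma>) has_real_derivative \<psi>' (\<gamma> t)) (at t within T))"
    if \<psi>: "infinitely_differentiable_on S \<psi>" for \<psi>
  proof -
    obtain D where D: "\<forall>i. infinitely_differentiable_on S (D i)"
      "\<forall>x\<in>S. (\<psi> has_derivative (\<lambda>h. \<Sum>i\<in>UNIV. D i x * h $ i)) (at x)"
      using \<psi> by (rule infinitely_differentiable_onE)
    define \<psi>' where "\<psi>' x = (\<Sum>i\<in>UNIV. D i x * V x $ i)" for x
    have "infinitely_differentiable_on S \<psi>'"
      unfolding \<psi>'_def
      by (intro infinitely_differentiable_on_rational_expr rational_expr_sum rational_expr.mult
          rational_expr.base) (use D V in auto)
    moreover have "((\<psi> \<circ> \<gamma>) has_real_derivative \<psi>' (\<gamma> t)) (at t within T)" if "t \<in> T" for t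
      unfolding has_field_derivative_def comp_def
      by (rule has_derivative_eq_rhs[OF has_derivative_compose[OF \<gamma>'[OF that,
            unfolded has_vector_derivative_def] D(2)[rule_format, OF \<gamma>[OF that]]]])
        (simp add: fun_eq_iff \<psi>'_def sum_distrib_left mult_ac)
    ultimately show ?thesis by blast
  qed
  then obtain d where d: "\<And>\<psi>. infinitely_differentiable_on S \<psi> \<Longrightarrow>
      infinitely_differentiable_on S (d \<psi>) \<and>
      (\<forall>t\<in>T. ((\<psi> \<circ> \<gamma>) has_real_derivative d \<psi> (\<gamma> t)) (at t within T))"
    by metis
  have smooth: "infinitely_differentiable_on S ((d ^^ k) \<phi>)" for k
    by (induction k) (use \<phi> d in auto)
  show ?thesis
    unfolding smooth_on_real_def
  proof (intro exI[of _ "\<lambda>k. (d ^^ k) \<phi> \<circ> \<gamma>"] conjI allI ballI)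
    fix k t assume "t \<in> T"
    then show "(((d ^^ k) \<phi> \<circ> \<gamma>) has_real_derivative ((d ^^ Suc k) \<phi> \<circ> \<gamma>) t) (at t within T)"
      using d[OF smooth[of k]] by simp
  qed simp
qed

locale level_curve =
  fixes \<Gamma> :: "(real,'n::{finite,wellorder}) vec set"
    and f :: "(real,'n) vec \<Rightarrow> real"
    and a :: "(real,'n) vec"
  assumes open_\<Gamma>: "open \<Gamma>" and convex_\<Gamma>: "convex \<Gamma>"
    and positive_orthant_subset: "{x. \<forall>i. 0 < x $ i} \<subseteq> \<Gamma>"
    and subset_halfspace: "\<Gamma> \<subseteq> {x. 0 < (\<Sum>i\<in>UNIV. x $ i)}"
    and f_smooth: "smooth_on_vec \<Gamma> f"
    and pd_f_pos: "\<And>i x. x \<in> \<Gamma> \<Longrightarrow> 0 < pd i f x"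
    and f_frontier: "\<And>l. l \<in> frontier \<Gamma> \<Longrightarrow> Limsup (at l within \<Gamma>) (\<lambda>x. ereal (f x)) < 1"
    and f_a: "f a = 1"
    and a_pos: "\<And>i. 0 < a $ i"
begin

definition a_tail :: "(real,'n) vec" where
  "a_tail = (\<chi> i. if i = first_idx then 0 else a $ i)"

definition pt :: "real \<Rightarrow> real \<Rightarrow> (real,'n) vec" where
  "pt s w = s *\<^sub>R axis first_idx 1 + w *\<^sub>R a_tail"

lemma pt_nth: "pt s w $ i = (if i = first_idx then s else a $ i * w)"
  by (simp add: pt_def a_tail_def axis_def)

lemma curve_pt_eq: "curve_pt h a w = pt (h w) w"
  by (simp add: curve_pt_def vec_eq_iff pt_nth)

lemma pt_mono: "s \<le> s' \<Longrightarrow> w \<le> w' \<Longrightarrow> pt s w \<le> pt s' w'"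
  using a_pos by (simp add: less_eq_vec_def pt_nth less_imp_le)

lemma f_has_derivative: "x \<in> \<Gamma> \<Longrightarrow> (f has_derivative (\<lambda>h. \<Sum>i\<in>UNIV. pd i f x * h $ i)) (at x)"
  by (rule smooth_on_vec_has_derivative[OF open_\<Gamma> f_smooth])

lemma isCont_f: "x \<in> \<Gamma> \<Longrightarrow> isCont f x"
  using f_has_derivative has_derivative_continuous by blast

lemma f_less: "x \<in> \<Gamma> \<Longrightarrow> y \<in> \<Gamma> \<Longrightarrow> x \<le> y \<Longrightarrow> x \<noteq> y \<Longrightarrow> f x < f y"
  by (rule less_if_positive_partials[OF convex_\<Gamma> _ _ _ _ f_has_derivative pd_f_pos])

lemma f_le: "x \<in> \<Gamma> \<Longrightarrow> y \<in> \<Gamma> \<Longrightarrow> x \<le> y \<Longrightarrow> f x \<le> f y"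
  using f_less by (cases "x = y") (auto intro: less_imp_le)

lemma f_pt_less: "pt s w \<in> \<Gamma> \<Longrightarrow> pt s' w \<in> \<Gamma> \<Longrightarrow> s < s' \<Longrightarrow> f (pt s w) < f (pt s' w)"
  by (rule f_less) (auto simp: pt_mono vec_eq_iff pt_nth intro!: exI[of _ first_idx])

lemma convex_section: "convex {s. pt s w \<in> \<Gamma>}"
proof (rule convexI)
  fix s s' u v :: real
  assume "s \<in> {s. pt s w \<in> \<Gamma>}" "s' \<in> {s. pt s w \<in> \<Gamma>}" "0 \<le> u" "0 \<le> v" "u + v = 1"
  moreover have "pt (u *\<^sub>R s + v *\<^sub>R s') w = u *\<^sub>R pt s w + v *\<^sub>R pt s' w"
    using \<open>u + v = 1\<close> by (simp add: vec_eq_iff pt_nth algebra_simps) (metis distrib_right mult_1)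
  ultimately show "u *\<^sub>R s + v *\<^sub>R s' \<in> {s. pt s w \<in> \<Gamma>}"
    using convexD[OF convex_\<Gamma>] by simp
qed

lemma pt_between: "pt s w \<in> \<Gamma> \<Longrightarrow> pt s' w \<in> \<Gamma> \<Longrightarrow> s \<le> t \<Longrightarrow> t \<le> s' \<Longrightarrow> pt t w \<in> \<Gamma>"
  using mem_is_interval_1_I[OF convex_section[unfolded is_interval_convex_1[symmetric]]] by blast

lemma level_unique:
  "pt s w \<in> \<Gamma> \<Longrightarrow> pt s' w \<in> \<Gamma> \<Longrightarrow> f (pt s w) = 1 \<Longrightarrow> f (pt s' w) = 1 \<Longrightarrow> s = s'"
  using f_pt_less[of s w s'] f_pt_less[of s' w s] by (cases s s' rule: linorder_cases) auto

lemma bdd_below_axis_line: "bdd_below {t. x + t *\<^sub>R axis i 1 \<in> \<Gamma>}"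
proof (rule bdd_belowI)
  fix t assume "t \<in> {t. x + t *\<^sub>R axis i 1 \<in> \<Gamma>}"
  then have "0 < (\<Sum>j\<in>UNIV. (x + t *\<^sub>R axis i 1) $ j)"
    using subset_halfspace by blast
  also have "\<dots> = (\<Sum>j\<in>UNIV. x $ j) + t * (\<Sum>j\<in>UNIV. axis i 1 $ j)"
    by (simp add: sum.distrib sum_distrib_left)
  also have "(\<Sum>j\<in>UNIV. axis i (1::real) $ j) = 1"
    by (simp add: axis_def)
  finally show "- (\<Sum>j\<in>UNIV. x $ j) \<le> t"
    by simp
qed

lemma level_exists:
  assumes "1 \<le> w"
  shows "\<exists>s. pt s w \<in> \<Gamma> \<and> f (pt s w) = 1"
proof -
  define s1 where "s1 = a $ first_idx"
  have "pt s1 w \<in> \<Gamma>"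
    using positive_orthant_subset a_pos \<open>1 \<le> w\<close> by (auto simp: pt_nth s1_def)
  moreover have "a \<in> \<Gamma>"
    using positive_orthant_subset a_pos by auto
  moreover have "a = pt s1 1" by (simp add: vec_eq_iff pt_nth s1_def)
  ultimately have "1 \<le> f (pt s1 w)"
    using f_le[of a "pt s1 w"] f_a pt_mono[of s1 s1 1 w] \<open>1 \<le> w\<close> by auto
  obtain t where "pt s1 w + t *\<^sub>R axis first_idx 1 \<in> \<Gamma>" "f (pt s1 w + t *\<^sub>R axis first_idx 1) < 1"
    using exists_less_on_line_if_Limsup_frontier_less[OF open_\<Gamma> \<open>pt s1 w \<in> \<Gamma>\<close>
        bdd_below_axis_line f_frontier[unfolded one_ereal_def]] by blast
  moreover have "pt s1 w + t *\<^sub>R axis first_idx 1 = pt (s1 + t) w"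
    by (simp add: pt_def algebra_simps)
  ultimately have below: "pt (s1 + t) w \<in> \<Gamma>" "f (pt (s1 + t) w) < 1" by auto
  then have "s1 + t \<le> s1"
    using f_pt_less[OF \<open>pt s1 w \<in> \<Gamma>\<close>, of "s1 + t"] \<open>1 \<le> f (pt s1 w)\<close> by force
  have line: "pt s w \<in> \<Gamma>" if "s \<in> {s1 + t..s1}" for s
    using pt_between[OF below(1) \<open>pt s1 w \<in> \<Gamma>\<close>] that by auto
  have "isCont (\<lambda>s. f (pt s w)) s" if "s \<in> {s1 + t..s1}" for s
    by (rule isCont_o2[where f="\<lambda>s. pt s w", OF _ isCont_f[OF line[OF that]]]) (simp add: pt_def)
  then have "continuous_on {s1 + t..s1} (\<lambda>s. f (pt s w))"
    by (simp add: continuous_at_imp_continuous_on)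
  then obtain s where "s1 + t \<le> s" "s \<le> s1" "f (pt s w) = 1"
    using IVT'[of "\<lambda>s. f (pt s w)" "s1 + t" 1 s1] below(2) \<open>1 \<le> f (pt s1 w)\<close> \<open>s1 + t \<le> s1\<close>
    by auto
  then show ?thesis
    using line by auto
qed

definition g :: "real \<Rightarrow> real" where
  "g w = (THE s. pt s w \<in> \<Gamma> \<and> f (pt s w) = 1)"

lemma g_level: "1 \<le> w \<Longrightarrow> pt (g w) w \<in> \<Gamma> \<and> f (pt (g w) w) = 1"
  unfolding g_def by (rule theI') (use level_exists level_unique in blast)

lemma g_eqI: "1 \<le> w \<Longrightarrow> pt s w \<in> \<Gamma> \<Longrightarrow> f (pt s w) = 1 \<Longrightarrow> g w = s"
  using g_level level_unique by blast

lemma antimono_g: "antimono_on {1..} g"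
proof (rule monotone_onI)
  fix w w' :: real assume "w \<in> {1..}" "w' \<in> {1..}" "w \<le> w'"
  show "g w' \<le> g w"
  proof (rule ccontr)
    assume "\<not> g w' \<le> g w"
    then have "pt (g w) w \<le> pt (g w') w'" "pt (g w) w \<noteq> pt (g w') w'"
      using \<open>w \<le> w'\<close> by (auto simp: pt_mono vec_eq_iff pt_nth)
    moreover have "pt (g w) w \<in> \<Gamma>" "f (pt (g w) w) = 1" "pt (g w') w' \<in> \<Gamma>" "f (pt (g w') w') = 1"
      using g_level \<open>w \<in> {1..}\<close> \<open>w' \<in> {1..}\<close> by auto
    ultimately show False
      using f_less[of "pt (g w) w" "pt (g w') w'"] by simp
  qed
qed

lemma eventually_g_between:
  assumes "pt s w \<in> \<Gamma>" "f (pt s w) < 1" "pt s' w \<in> \<Gamma>" "1 < f (pt s' w)"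
  shows "\<forall>\<^sub>F w' in at w within {1..}. s < g w' \<and> g w' < s'"
proof -
  have tendsto_pt: "((\<lambda>w'. pt r w') \<longlongrightarrow> pt r w) (at w within {1..})" for r
    unfolding pt_def by (intro tendsto_intros)
  have "\<forall>\<^sub>F w' in at w within {1..}. pt r w' \<in> \<Gamma>" if "pt r w \<in> \<Gamma>" for r
    using topological_tendstoD[OF tendsto_pt open_\<Gamma> that] .
  moreover have "((\<lambda>w'. f (pt r w')) \<longlongrightarrow> f (pt r w)) (at w within {1..})" if "pt r w \<in> \<Gamma>" for r
    using isCont_tendsto_compose[OF isCont_f[OF that] tendsto_pt] .
  moreover have "\<forall>\<^sub>F w' in at w within {1..}. 1 \<le> w'"
    by (simp add: eventually_at_filter)
  ultimately have "\<forall>\<^sub>F w' in at w within {1..}. 1 \<le> w' \<and> pt s w' \<in> \<Gamma> \<and> f (pt s w') < 1 \<and>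
      pt s' w' \<in> \<Gamma> \<and> 1 < f (pt s' w')"
    using assms by (auto intro!: eventually_conj order_tendstoD)
  then show ?thesis
  proof eventually_elim
    case (elim w')
    then have level: "pt (g w') w' \<in> \<Gamma>" "f (pt (g w') w') = 1"
      using g_level by auto
    show ?case
    proof
      show "s < g w'"
      proof (rule ccontr)
        assume "\<not> s < g w'"
        then have "f (pt (g w') w') \<le> f (pt s w')"
          using f_le[OF level(1) _ pt_mono[of "g w'" s w' w']] elim by auto
        then show False using level elim by simp
      qed
      show "g w' < s'"
      proof (rule ccontr)
        assume "\<not> g w' < s'"
        then have "f (pt s' w') \<le> f (pt (g w') w')"
          using f_le[OF _ level(1) pt_mono[of s' "g w'" w' w']] elim by auto
        then show False using level elim by simp
      qed
    qed
  qed
qed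

lemma continuous_on_g: "continuous_on {1..} g"
  unfolding continuous_on_def
proof (intro ballI tendstoI)
  fix w \<epsilon> :: real assume "w \<in> {1..}" "0 < \<epsilon>"
  then have level: "pt (g w) w \<in> \<Gamma>" "f (pt (g w) w) = 1"
    using g_level by auto
  then obtain r where "0 < r" "ball (pt (g w) w) r \<subseteq> \<Gamma>"
    using open_\<Gamma> open_contains_ball by blast
  define \<delta> where "\<delta> = min \<epsilon> (r / 2)"
  have "0 < \<delta>" "\<delta> < r"
    using \<open>0 < \<epsilon>\<close> \<open>0 < r\<close> by (auto simp: \<delta>_def)
  have near: "pt (g w + c) w \<in> \<Gamma>" if "\<bar>c\<bar> \<le> \<delta>" for c
  proof (rule subsetD[OF \<open>ball (pt (g w) w) r \<subseteq> \<Gamma>\<close>])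
    have "pt (g w) w - pt (g w + c) w = (- c) *\<^sub>R axis first_idx 1"
      by (simp add: pt_def algebra_simps)
    then show "pt (g w + c) w \<in> ball (pt (g w) w) r"
      using that \<open>\<delta> < r\<close> by (simp add: dist_norm)
  qed
  have "pt (g w - \<delta>) w \<in> \<Gamma>" "pt (g w + \<delta>) w \<in> \<Gamma>"
    using near[of "- \<delta>"] near[of \<delta>] \<open>0 < \<delta>\<close> by simp_all
  then have "\<forall>\<^sub>F w' in at w within {1..}. g w - \<delta> < g w' \<and> g w' < g w + \<delta>"
    using \<open>0 < \<delta>\<close> level f_pt_less[of "g w - \<delta>" w "g w"] f_pt_less[of "g w" w "g w + \<delta>"]
    by (intro eventually_g_between) auto
  then show "\<forall>\<^sub>F w' in at w within {1..}. dist (g w') (g w) < \<epsilon>"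
    by eventually_elim (auto simp: dist_real_def \<delta>_def)
qed

definition slope :: "(real,'n) vec \<Rightarrow> real" where
  "slope x = - (\<Sum>i\<in>UNIV. a_tail $ i * pd i f x) / pd first_idx f x"

lemma infinitely_differentiable_on_slope: "infinitely_differentiable_on \<Gamma> slope"
proof -
  have pd: "infinitely_differentiable_on \<Gamma> (pd i f)" for i
    by (rule smooth_on_vec_imp_infinitely_differentiable_on[OF open_\<Gamma> smooth_on_vec_pd[OF f_smooth]])
  have "slope = (\<lambda>x. (- 1 * (\<Sum>i\<in>UNIV. a_tail $ i * pd i f x)) * inverse (pd first_idx f x))"
    by (simp add: fun_eq_iff slope_def divide_inverse)
  then show ?thesis
    by (simp only:, intro infinitely_differentiable_on_rational_expr rational_expr.mult
        rational_expr.const rational_expr.inverse rational_expr_sum rational_expr.base)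
      (auto intro: pd dest: pd_f_pos[where i=first_idx])
qed

lemma g_difference_quotient:
  assumes "1 \<le> w" "1 \<le> w'" "w' \<noteq> w"
  shows "\<exists>\<xi>\<in>closed_segment (pt (g w) w) (pt (g w') w'). (g w' - g w) / (w' - w) = slope \<xi>"
proof -
  let ?x = "pt (g w) w" and ?y = "pt (g w') w'"
  have "closed_segment ?x ?y \<subseteq> \<Gamma>"
    using g_level assms convex_\<Gamma> by (simp add: closed_segment_subset)
  then obtain \<xi> where "\<xi> \<in> closed_segment ?x ?y" "\<xi> \<in> \<Gamma>"
    and mvt: "f ?y - f ?x = (\<Sum>i\<in>UNIV. pd i f \<xi> * (?y - ?x) $ i)"
    using mean_value_partials[of ?x ?y f "\<lambda>i. pd i f"] f_has_derivative by blast
  have "pd i f \<xi> * (?y - ?x) $ i =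
      (if i = first_idx then (g w' - g w) * pd i f \<xi> else 0) + (w' - w) * (a_tail $ i * pd i f \<xi>)" for i
    by (simp add: pt_nth a_tail_def algebra_simps)
  then have "(\<Sum>i\<in>UNIV. pd i f \<xi> * (?y - ?x) $ i) =
      (g w' - g w) * pd first_idx f \<xi> + (w' - w) * (\<Sum>i\<in>UNIV. a_tail $ i * pd i f \<xi>)"
    by (simp add: sum.distrib sum_distrib_left)
  moreover have "f ?y - f ?x = 0"
    using g_level assms by simp
  moreover have "0 < pd first_idx f \<xi>"
    using pd_f_pos \<open>\<xi> \<in> \<Gamma>\<close> by blast
  ultimately have "(g w' - g w) / (w' - w) = slope \<xi>"
    using assms(3) mvt by (simp add: slope_def field_simps)
  then show ?thesis
    using \<open>\<xi> \<in> closed_segment ?x ?y\<close> by blast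
qed

lemma g_has_real_derivative:
  assumes "1 \<le> w"
  shows "(g has_real_derivative slope (pt (g w) w)) (at w within {1..})"
proof -
  let ?x = "pt (g w) w" and ?F = "at w within {1..}"
  obtain \<xi> where \<xi>: "\<And>w'. 1 \<le> w' \<Longrightarrow> w' \<noteq> w \<Longrightarrow>
      \<xi> w' \<in> closed_segment ?x (pt (g w') w') \<and> (g w' - g w) / (w' - w) = slope (\<xi> w')"
    using g_difference_quotient[OF assms] by metis
  have "((\<lambda>w'. pt (g w') w') \<longlongrightarrow> ?x) ?F"
    using continuous_on_g assms unfolding continuous_on_def pt_def
    by (auto intro!: tendsto_intros)
  then have "((\<lambda>w'. norm (pt (g w') w' - ?x)) \<longlongrightarrow> 0) ?F"
    by (simp add: tendsto_norm_zero LIM_zero)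
  moreover have "\<forall>\<^sub>F w' in ?F. norm (\<xi> w' - ?x) \<le> norm (pt (g w') w' - ?x)"
    unfolding eventually_at_filter
  proof (rule always_eventually, intro allI impI)
    fix w' :: real assume "w' \<noteq> w" "w' \<in> {1..}"
    then show "norm (\<xi> w' - ?x) \<le> norm (pt (g w') w' - ?x)"
      using \<xi>[of w'] by (simp add: segment_bound1)
  qed
  ultimately have "((\<lambda>w'. \<xi> w' - ?x) \<longlongrightarrow> 0) ?F"
    by (rule Lim_null_comparison[rotated])
  then have "(\<xi> \<longlongrightarrow> ?x) ?F"
    by (rule LIM_zero_cancel)
  then have "((\<lambda>w'. slope (\<xi> w')) \<longlongrightarrow> slope ?x) ?F"
    using isCont_tendsto_compose infinitely_differentiable_on_imp_isCont[OF infinitely_differentiable_on_slope]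
      g_level assms by blast
  moreover have "\<forall>\<^sub>F w' in ?F. slope (\<xi> w') = (g w' - g w) / (w' - w)"
    unfolding eventually_at_filter by (rule always_eventually) (simp add: \<xi>)
  ultimately show ?thesis
    unfolding has_field_derivative_iff by (rule Lim_transform_eventually)
qed

lemma smooth_on_real_g: "smooth_on_real {1..} g"
proof -
  define V where "V x = slope x *\<^sub>R axis first_idx 1 + a_tail" for x
  have curve: "(\<lambda>w. pt (g w) w) = (\<lambda>w. g w *\<^sub>R axis first_idx 1 + w *\<^sub>R a_tail)"
    by (simp add: fun_eq_iff pt_def)
  have curve_deriv: "((\<lambda>w. pt (g w) w) has_vector_derivative V (pt (g w) w)) (at w within {1..})"
    if "w \<in> {1..}" for w
    using g_has_real_derivative that unfolding curve V_def
    by (auto intro!: derivative_eq_intros simp: has_real_derivative_iff_has_vector_derivative)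
  have V_smooth: "infinitely_differentiable_on \<Gamma> (\<lambda>x. V x $ i)" for i
  proof -
    have "(\<lambda>x. V x $ i) = (\<lambda>x. slope x * axis first_idx 1 $ i + a_tail $ i)"
      by (simp add: fun_eq_iff V_def)
    then show ?thesis
      by (simp only:, intro infinitely_differentiable_on_rational_expr rational_expr.add
          rational_expr.mult rational_expr.const rational_expr.base)
        (simp add: infinitely_differentiable_on_slope)
  qed
  have "(\<lambda>x. x $ first_idx) \<circ> (\<lambda>w. pt (g w) w) = g"
    by (simp add: fun_eq_iff pt_nth)
  moreover have "smooth_on_real {1..} ((\<lambda>x. x $ first_idx) \<circ> (\<lambda>w. pt (g w) w))"
    by (rule smooth_on_real_comp_integral_curve[OF _ curve_deriv V_smooth infinitely_differentiable_on_nth])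
      (use g_level in auto)
  ultimately show ?thesis by (simp only:)
qed

end

theorem lemma2p3:
  fixes \<Gamma> :: "(real,'n::{finite,wellorder}) vec set"
    and f :: "(real,'n) vec \<Rightarrow> real"
    and a :: "(real,'n) vec"
  assumes cone_open: "open \<Gamma>" and cone_convex: "convex \<Gamma>"
    and cone_proper: "\<Gamma> \<noteq> UNIV"
    and cone: "\<And>x t. x \<in> \<Gamma> \<Longrightarrow> 0 < t \<Longrightarrow> t *\<^sub>R x \<in> \<Gamma>"
    and pos_sub: "{x. \<forall>i. 0 < x $ i} \<subseteq> \<Gamma>"
    and sub_halfspace: "\<Gamma> \<subseteq> {x. 0 < (\<Sum>i\<in>UNIV. x $ i)}"
    and f_smooth: "smooth_on_vec \<Gamma> f"
    and f_symm: "\<And>p x. p permutes (UNIV :: 'n set) \<Longrightarrow> x \<in> \<Gamma> \<Longrightarrow>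
                    (\<chi> i. x $ p i) \<in> \<Gamma> \<and> f (\<chi> i. x $ p i) = f x"
    and f_incr: "\<And>i x. x \<in> \<Gamma> \<Longrightarrow> 0 < pd i f x"
    and f_bdry: "\<And>l. l \<in> frontier \<Gamma> \<Longrightarrow> Limsup (at l within \<Gamma>) (\<lambda>x. ereal (f x)) < 1"
    and a_A: "in_class_A f a"
    and a_pos: "\<And>i. 0 < a $ i"
    and a_sorted: "\<And>i j. i \<le> j \<Longrightarrow> a $ i \<le> a $ j"
  shows "\<exists>g. (antimono_on {1..} g \<and> smooth_on_real {1..} g \<and>
              (\<forall>w\<ge>1. curve_pt g a w \<in> \<Gamma> \<and> f (curve_pt g a w) = 1)) \<and>
            (\<forall>h. antimono_on {1..} h \<and> smooth_on_real {1..} h \<and>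
              (\<forall>w\<ge>1. curve_pt h a w \<in> \<Gamma> \<and> f (curve_pt h a w) = 1)
              \<longrightarrow> (\<forall>w\<ge>1. h w = g w))"
proof -
  interpret level_curve \<Gamma> f a
    using cone_open cone_convex pos_sub sub_halfspace f_smooth f_incr f_bdry a_A a_pos
    by unfold_locales (auto simp: in_class_A_def)
  have "antimono_on {1..} g \<and> smooth_on_real {1..} g \<and>
      (\<forall>w\<ge>1. curve_pt g a w \<in> \<Gamma> \<and> f (curve_pt g a w) = 1)"
    using antimono_g smooth_on_real_g g_level by (simp add: curve_pt_eq)
  moreover have "h w = g w"
    if "\<forall>w\<ge>1. curve_pt h a w \<in> \<Gamma> \<and> f (curve_pt h a w) = 1" "1 \<le> w" for h w
    using that by (intro g_eqI[symmetric]) (simp_all add: curve_pt_eq)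
  ultimately show ?thesis by blast
qed

end
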